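(* Let $G$ and $H$ be two connected nontrivial graphs. If $S$ is a cycle hull set of $G\Box H$, then $\pi_G(S)$ and $\pi_H(S)$ are cycle hull sets of $G$ and $H$ respectively.
   Context: All graphs are finite, simple and undirected. For a graph $G$ and $S\subseteq V(G)$, the cycle interval $\langle S\rangle$ consists of the vertices of $S$ together with every vertex $w\in V(G)\setminus S$ such that $G[S\cup\{w\}]$ contains a cycle through $w$; $S$ is cycle convex if $\langle S\rangle=S$; the cycle convex hull $\langle S\rangle_C$ is the smallest cycle convex set containing $S$; $S$ is a cycle hull set if $\langle S\rangle_C=V(G)$. The Cartesian product $G\Box H$ has vertex set $V(G)\times V(H)$, with $(g_1,h_1)\sim(g_2,h_2)$ iff ($g_1\sim g_2$ and $h_1=h_2$) or ($g_1=g_2$ and $h_1\sim h_2$). For $S\subseteq V(G)\times V(H)$, $\pi_G(S)=\{g:(g,h)\in S\text{ for some }h\}$ and $\pi_H(S)=\{h:(g,h)\in S\text{ for some }g\}$. A graph is nontrivial if it has at least two vertices. *)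

theory Defs
  imports Main
begin

definition graph :: "'a set \<Rightarrow> ('a \<Rightarrow> 'a \<Rightarrow> bool) \<Rightarrow> bool" where
  "graph V E \<longleftrightarrow> finite V \<and> (\<forall>x y. E x y \<longrightarrow> x \<in> V \<and> y \<in> V)
     \<and> (\<forall>x y. E x y \<longrightarrow> E y x) \<and> (\<forall>x. \<not> E x x)"

fun walk :: "('a \<Rightarrow> 'a \<Rightarrow> bool) \<Rightarrow> 'a list \<Rightarrow> bool" where
  "walk E [] = True"
| "walk E [x] = True"
| "walk E (x # y # xs) = (E x y \<and> walk E (y # xs))"

definition connected :: "'a set \<Rightarrow> ('a \<Rightarrow> 'a \<Rightarrow> bool) \<Rightarrow> bool" where
  "connected V E \<longleftrightarrow> (\<forall>x\<in>V. \<forall>y\<in>V. \<exists>p. p \<noteq> [] \<and> hd p = x \<and> last p = y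
      \<and> set p \<subseteq> V \<and> walk E p)"

definition is_cycle :: "('a \<Rightarrow> 'a \<Rightarrow> bool) \<Rightarrow> 'a list \<Rightarrow> bool" where
  "is_cycle E c \<longleftrightarrow> length c \<ge> 3 \<and> distinct c \<and> walk E c \<and> E (last c) (hd c)"

definition cycle_through :: "('a \<Rightarrow> 'a \<Rightarrow> bool) \<Rightarrow> 'a set \<Rightarrow> 'a \<Rightarrow> bool" where
  "cycle_through E T w \<longleftrightarrow> (\<exists>c. is_cycle E c \<and> set c \<subseteq> T \<and> w \<in> set c)"

definition cycle_interval :: "'a set \<Rightarrow> ('a \<Rightarrow> 'a \<Rightarrow> bool) \<Rightarrow> 'a set \<Rightarrow> 'a set" where
  "cycle_interval V E S = S \<union> {w \<in> V - S. cycle_through E (S \<union> {w}) w}"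

definition cycle_convex :: "'a set \<Rightarrow> ('a \<Rightarrow> 'a \<Rightarrow> bool) \<Rightarrow> 'a set \<Rightarrow> bool" where
  "cycle_convex V E S \<longleftrightarrow> cycle_interval V E S = S"

definition cycle_hull :: "'a set \<Rightarrow> ('a \<Rightarrow> 'a \<Rightarrow> bool) \<Rightarrow> 'a set \<Rightarrow> 'a set" where
  "cycle_hull V E S = \<Inter> {T. S \<subseteq> T \<and> T \<subseteq> V \<and> cycle_convex V E T}"

definition cycle_hull_set :: "'a set \<Rightarrow> ('a \<Rightarrow> 'a \<Rightarrow> bool) \<Rightarrow> 'a set \<Rightarrow> bool" where
  "cycle_hull_set V E S \<longleftrightarrow> S \<subseteq> V \<and> cycle_hull V E S = V"

definition cart_adj :: "('a \<Rightarrow> 'a \<Rightarrow> bool) \<Rightarrow> ('b \<Rightarrow> 'b \<Rightarrow> bool)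
    \<Rightarrow> 'a \<times> 'b \<Rightarrow> 'a \<times> 'b \<Rightarrow> bool" where
  "cart_adj E F = (\<lambda>(g1, h1) (g2, h2). (E g1 g2 \<and> h1 = h2) \<or> (g1 = g2 \<and> F h1 h2))"

end

theory Submission
  imports Defs
begin

(* A projection pi of G x H onto a factor maps every edge to an edge or to a single vertex, and
   two neighbours of a vertex w outside the fibre of w have distinct images.  Hence the preimage
   of a cycle convex set T is cycle convex: if a cycle through w has all its other vertices in the
   preimage, their images form a walk in T between two distinct neighbours of pi w, and shortening
   it to a path closes a cycle through pi w in T with pi w added.  So if S is a hull set of the
   product, every convex set containing pi S has everything in its preimage. *)

lemma walk_Cons: "walk E (x # q) \<longleftrightarrow> q = [] \<or> E x (hd q) \<and> walk E q"
  by (cases q) auto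

lemma walk_append:
  "walk E (xs @ ys) \<longleftrightarrow> walk E xs \<and> walk E ys \<and> (xs \<noteq> [] \<and> ys \<noteq> [] \<longrightarrow> E (last xs) (hd ys))"
  by (induction xs) (auto simp: walk_Cons)

lemma walk_map:
  assumes "\<And>x y. E x y \<Longrightarrow> F (f x) (f y)" and "walk E p"
  shows "walk F (map f p)"
  using assms(2) by (induction p rule: induct_list012) (auto intro: assms(1))

lemma is_cycle_Cons:
  "is_cycle E (w # q) \<longleftrightarrow>
     length q \<ge> 2 \<and> distinct q \<and> w \<notin> set q \<and> walk E q \<and> E w (hd q) \<and> E (last q) w"
  unfolding is_cycle_def by (cases q) auto

lemma is_cycle_rotate:
  assumes "is_cycle E c" and "w \<in> set c"
  obtains q where "is_cycle E (w # q)" and "set (w # q) = set c"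
proof -
  obtain xs ys where c: "c = xs @ w # ys"
    using assms(2) by (meson split_list)
  have walks: "walk E (w # ys)" "walk E xs" "xs \<noteq> [] \<Longrightarrow> E (last xs) w"
    and closing: "E (last c) (hd c)"
    using assms(1) c unfolding is_cycle_def by (auto simp: walk_append)
  have "walk E ((w # ys) @ xs)"
    using walks closing c by (subst walk_append) (cases xs; auto)
  moreover have "E (last ((w # ys) @ xs)) w"
    using walks closing c by (cases xs) auto
  ultimately have "is_cycle E ((w # ys) @ xs)"
    using assms(1) c unfolding is_cycle_def by auto
  then show thesis
    using c by (intro that[of "ys @ xs"]) auto
qed

lemma walk_reflclp_shorten:
  assumes "walk E\<^sup>=\<^sup>= q" and "q \<noteq> []"
  obtains q' where "distinct q'" "walk E q'" "q' \<noteq> []" "hd q' = hd q" "last q' = last q"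
    "set q' \<subseteq> set q"
  using assms
proof (induction q arbitrary: thesis rule: induct_list012)
  case 1
  then show ?case by simp
next
  case (2 x)
  then show ?case by (intro "2.prems"(1)[of "[x]"]) auto
next
  case (3 x y xs)
  then obtain q0 where q0: "distinct q0" "walk E q0" "q0 \<noteq> []" "hd q0 = y"
    "last q0 = last (y # xs)" "set q0 \<subseteq> set (y # xs)"
    by auto
  show ?case
  proof (cases "x \<in> set q0")
    case True
    then obtain u v where "q0 = u @ x # v"
      by (meson split_list)
    then show ?thesis
      using q0 by (intro "3.prems"(1)[of "x # v"]) (auto simp: walk_append)
  next
    case False
    then have "E x y"
      using "3.prems"(2) q0(3,4) by (cases q0) auto
    then show ?thesis
      using q0 False by (intro "3.prems"(1)[of "x # q0"]) (auto simp: walk_Cons)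
  qed
qed

lemma cycle_convex_iff:
  "cycle_convex V E T \<longleftrightarrow> (\<forall>w \<in> V - T. \<not> cycle_through E (T \<union> {w}) w)"
  unfolding cycle_convex_def cycle_interval_def by auto

lemma cycle_convex_vertices: "cycle_convex V E V"
  by (simp add: cycle_convex_iff)

lemma cycle_hull_set_iff:
  "cycle_hull_set V E S \<longleftrightarrow>
     S \<subseteq> V \<and> (\<forall>T. S \<subseteq> T \<longrightarrow> T \<subseteq> V \<longrightarrow> cycle_convex V E T \<longrightarrow> V \<subseteq> T)"
proof -
  have "S \<subseteq> V \<Longrightarrow> cycle_hull V E S \<subseteq> V"
    unfolding cycle_hull_def using cycle_convex_vertices by blast
  then show ?thesis
    unfolding cycle_hull_set_def cycle_hull_def by blast
qed

lemma cycle_convex_vimage: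
  assumes maps_to: "\<pi> ` V' \<subseteq> V"
    and weak_hom: "\<And>x y. E' x y \<Longrightarrow> \<pi> x = \<pi> y \<or> E (\<pi> x) (\<pi> y)"
    and locally_inj: "\<And>w u v. E' w u \<Longrightarrow> E' v w \<Longrightarrow> \<pi> u \<noteq> \<pi> w \<Longrightarrow> \<pi> u = \<pi> v \<Longrightarrow> u = v"
    and convex: "cycle_convex V E T"
  shows "cycle_convex V' E' {x \<in> V'. \<pi> x \<in> T}"
  unfolding cycle_convex_iff
proof (intro ballI notI)
  let ?P = "{x \<in> V'. \<pi> x \<in> T}"
  fix w
  assume w: "w \<in> V' - ?P" and "cycle_through E' (?P \<union> {w}) w"
  then obtain c where c: "is_cycle E' c" "set c \<subseteq> ?P \<union> {w}" "w \<in> set c"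
    unfolding cycle_through_def by auto
  obtain p where p: "is_cycle E' (w # p)" "set (w # p) = set c"
    using is_cycle_rotate[OF c(1,3)] by blast
  then have p_facts: "length p \<ge> 2" "distinct p" "w \<notin> set p" "walk E' p"
    "E' w (hd p)" "E' (last p) w"
    by (simp_all add: is_cycle_Cons)
  have p_ne: "p \<noteq> []"
    using p_facts(1) by auto
  have image_p: "\<pi> ` set p \<subseteq> T"
    using p(2) c(2) p_facts(3) by auto
  have w_out: "\<pi> w \<in> V - T"
    using w maps_to by auto
  have ends_in_T: "\<pi> (hd p) \<in> T" "\<pi> (last p) \<in> T"
    using image_p p_ne by auto
  have "\<pi> (hd p) \<noteq> \<pi> (last p)"
  proof
    assume "\<pi> (hd p) = \<pi> (last p)"
    then have "hd p = last p"
      using locally_inj[OF p_facts(5,6)] ends_in_T(1) w_out by fastforce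
    with p_facts(1,2) show False
      by (cases p) (auto split: if_splits)
  qed
  moreover have "walk E\<^sup>=\<^sup>= (map \<pi> p)"
    using walk_map[OF _ p_facts(4), of "E\<^sup>=\<^sup>=" \<pi>] weak_hom by auto
  ultimately obtain q where q: "distinct q" "walk E q" "q \<noteq> []"
    "hd q = \<pi> (hd p)" "last q = \<pi> (last p)" "set q \<subseteq> T"
    using image_p p_ne by (auto simp: hd_map last_map elim!: walk_reflclp_shorten)
  have "length q \<ge> 2"
    using q(3-5) \<open>\<pi> (hd p) \<noteq> \<pi> (last p)\<close> by (cases q; cases "tl q") auto
  moreover have "E (\<pi> w) (hd q)" "E (last q) (\<pi> w)"
    using weak_hom[OF p_facts(5)] weak_hom[OF p_facts(6)] q(4,5) ends_in_T w_out by auto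
  ultimately have "is_cycle E (\<pi> w # q)"
    using q w_out by (auto simp: is_cycle_Cons)
  then have "cycle_through E (T \<union> {\<pi> w}) (\<pi> w)"
    unfolding cycle_through_def using q(6) by force
  then show False
    using convex w_out by (auto simp: cycle_convex_iff)
qed

lemma cycle_hull_set_image:
  assumes hull: "cycle_hull_set V' E' S" and onto: "\<pi> ` V' = V"
    and convex_vimage: "\<And>T. cycle_convex V E T \<Longrightarrow> cycle_convex V' E' {x \<in> V'. \<pi> x \<in> T}"
  shows "cycle_hull_set V E (\<pi> ` S)"
  unfolding cycle_hull_set_iff
proof (intro conjI allI impI)
  show "\<pi> ` S \<subseteq> V"
    using hull onto by (auto simp: cycle_hull_set_iff)
next
  fix T
  assume "\<pi> ` S \<subseteq> T" and "cycle_convex V E T"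
  moreover have "S \<subseteq> V'" and
    minimal: "\<And>U. S \<subseteq> U \<Longrightarrow> U \<subseteq> V' \<Longrightarrow> cycle_convex V' E' U \<Longrightarrow> V' \<subseteq> U"
    using hull by (simp_all add: cycle_hull_set_iff)
  ultimately have "V' \<subseteq> {x \<in> V'. \<pi> x \<in> T}"
    by (intro minimal convex_vimage) auto
  then show "V \<subseteq> T"
    using onto by auto
qed

lemma cart_adj_fst: "cart_adj EG EH x y \<Longrightarrow> fst x = fst y \<or> EG (fst x) (fst y)"
  and cart_adj_snd: "cart_adj EG EH x y \<Longrightarrow> snd x = snd y \<or> EH (snd x) (snd y)"
  by (auto simp: cart_adj_def split: prod.splits)

lemma cart_adj_fst_locally_inj:
  "cart_adj EG EH w u \<Longrightarrow> cart_adj EG EH v w \<Longrightarrow> fst u \<noteq> fst w \<Longrightarrow> fst u = fst v \<Longrightarrow> u = v"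
  and cart_adj_snd_locally_inj:
  "cart_adj EG EH w u \<Longrightarrow> cart_adj EG EH v w \<Longrightarrow> snd u \<noteq> snd w \<Longrightarrow> snd u = snd v \<Longrightarrow> u = v"
  by (auto simp: cart_adj_def split: prod.splits)

lemma cycle_hull_set_fst_image:
  assumes "VH \<noteq> {}" and "cycle_hull_set (VG \<times> VH) (cart_adj EG EH) S"
  shows "cycle_hull_set VG EG (fst ` S)"
proof (rule cycle_hull_set_image[OF assms(2)])
  show "fst ` (VG \<times> VH) = VG"
    using assms(1) by simp
  show "cycle_convex (VG \<times> VH) (cart_adj EG EH) {x \<in> VG \<times> VH. fst x \<in> T}"
    if "cycle_convex VG EG T" for T
    by (rule cycle_convex_vimage[OF _ cart_adj_fst[of EG EH] cart_adj_fst_locally_inj[of EG EH]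
          that]) auto
qed

lemma cycle_hull_set_snd_image:
  assumes "VG \<noteq> {}" and "cycle_hull_set (VG \<times> VH) (cart_adj EG EH) S"
  shows "cycle_hull_set VH EH (snd ` S)"
proof (rule cycle_hull_set_image[OF assms(2)])
  show "snd ` (VG \<times> VH) = VH"
    using assms(1) by simp
  show "cycle_convex (VG \<times> VH) (cart_adj EG EH) {x \<in> VG \<times> VH. snd x \<in> T}"
    if "cycle_convex VH EH T" for T
    by (rule cycle_convex_vimage[OF _ cart_adj_snd[of EG EH] cart_adj_snd_locally_inj[of EG EH]
          that]) auto
qed

theorem mainTheorem5:
  fixes VG :: "'a set" and EG :: "'a \<Rightarrow> 'a \<Rightarrow> bool"
    and VH :: "'b set" and EH :: "'b \<Rightarrow> 'b \<Rightarrow> bool"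
    and S :: "('a \<times> 'b) set"
  assumes "graph VG EG" and "graph VH EH"
    and "connected VG EG" and "connected VH EH"
    and "card VG \<ge> 2" and "card VH \<ge> 2"
    and "cycle_hull_set (VG \<times> VH) (cart_adj EG EH) S"
  shows "cycle_hull_set VG EG (fst ` S) \<and> cycle_hull_set VH EH (snd ` S)"
proof -
  have "VG \<noteq> {}" and "VH \<noteq> {}"
    using assms(5,6) by auto
  with assms(7) show ?thesis
    by (simp add: cycle_hull_set_fst_image cycle_hull_set_snd_image)
qed

end
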